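(* Let $U\subset\mathbb R^2$ be a compact star-shaped domain (origin in the interior, smooth boundary) and let $\hat U$ be its convex hull. Then $\rho_{\rm sys}(\mathbb T^2\times U)\le\dfrac{\mathrm{area}(\hat U)}{3\,\mathrm{area}(U)}$.
   Context: $\mathbb T^2=\mathbb R^2/\mathbb Z^2$, $T^*\mathbb T^2=\mathbb T^2\times\mathbb R^2$, $\lambda_{\rm can}=p_1dq_1+p_2dq_2$. For $X=\mathbb T^2\times A$, $\mathrm{sys}(\partial X)$ is the minimal action of a closed Reeb orbit of $\lambda_{\rm can}|_{\partial X}$, $\mathrm{vol}(\partial X)=\int_{\partial X}\lambda_{\rm can}\wedge d\lambda_{\rm can}$ $(=2\,\mathrm{area}(A))$, and $\rho_{\rm sys}(X)=\mathrm{sys}(\partial X)^2/\mathrm{vol}(\partial X)$; when $\partial A$ is not smooth (as may happen for $\hat U$), quantities are defined as limits over $C^0$-close smooth approximations of $A$. *)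

theory Defs
  imports "HOL-Analysis.Analysis"
begin

text \<open>The phase space
  T^*T^2 = T^2 x R^2 is lifted to its universal cover in q: a point is a pair
  (q, p) with q, p in R^2; closedness of orbits in T^2 is closedness modulo
  the lattice Z^2 in the q-component.\<close>

type_synonym pt = "real \<times> real"
type_synonym phase = "pt \<times> pt"

definition smooth_fun :: "(real \<Rightarrow> real) \<Rightarrow> bool" where
  "smooth_fun f \<longleftrightarrow> (\<forall>n x. ((deriv ^^ n) f) differentiable (at x))"

definition radial_domain :: "(real \<Rightarrow> real) \<Rightarrow> pt set" where
  "radial_domain f = {(r * cos t, r * sin t) | r t. 0 \<le> r \<and> r \<le> f t}"

text \<open>Compact star-shaped domain, origin in the interior, smooth boundary
  (transverse to the radial direction, as needed for the contact condition).\<close>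
definition smooth_star_shaped_domain :: "pt set \<Rightarrow> bool" where
  "smooth_star_shaped_domain U \<longleftrightarrow>
     (\<exists>f. smooth_fun f \<and> (\<forall>t. f t > 0) \<and> (\<forall>t. f (t + 2 * pi) = f t)
          \<and> U = radial_domain f)"

definition in_lattice :: "pt \<Rightarrow> bool" where
  "in_lattice k \<longleftrightarrow> fst k \<in> \<int> \<and> snd k \<in> \<int>"

definition tangent_vectors :: "'a::real_normed_vector set \<Rightarrow> 'a \<Rightarrow> 'a set" where
  "tangent_vectors S x = {v. \<exists>\<gamma> e. e > 0 \<and> (\<forall>t\<in>{-e<..<e}. \<gamma> t \<in> S) \<and> \<gamma> 0 = x
       \<and> (\<gamma> has_vector_derivative v) (at 0)}"

text \<open>lambda_can = p1 dq1 + p2 dq2, evaluated at (q,p) on a vector (a,b).\<close>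
definition lam_can :: "phase \<Rightarrow> phase \<Rightarrow> real" where
  "lam_can x v = snd x \<bullet> fst v"

text \<open>d lambda_can = dp1 /\ dq1 + dp2 /\ dq2 (constant coefficients).\<close>
definition dlam_can :: "phase \<Rightarrow> phase \<Rightarrow> real" where
  "dlam_can v w = snd v \<bullet> fst w - snd w \<bullet> fst v"

definition bdry_lift :: "pt set \<Rightarrow> phase set" where
  "bdry_lift A = UNIV \<times> frontier A"

definition is_reeb_vector :: "phase set \<Rightarrow> phase \<Rightarrow> phase \<Rightarrow> bool" where
  "is_reeb_vector \<Sigma> x v \<longleftrightarrow> v \<in> tangent_vectors \<Sigma> x \<and> lam_can x v = 1
      \<and> (\<forall>w\<in>tangent_vectors \<Sigma> x. dlam_can v w = 0)"

definition closed_reeb_orbit :: "phase set \<Rightarrow> (real \<Rightarrow> phase) \<Rightarrow> real \<Rightarrow> bool" where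
  "closed_reeb_orbit \<Sigma> \<gamma> T \<longleftrightarrow> T > 0 \<and> (\<forall>t. \<gamma> t \<in> \<Sigma>)
     \<and> (\<forall>t. \<exists>v. (\<gamma> has_vector_derivative v) (at t) \<and> is_reeb_vector \<Sigma> (\<gamma> t) v)
     \<and> in_lattice (fst (\<gamma> T) - fst (\<gamma> 0)) \<and> snd (\<gamma> T) = snd (\<gamma> 0)"

definition action :: "(real \<Rightarrow> phase) \<Rightarrow> real \<Rightarrow> real" where
  "action \<gamma> T = integral {0..T} (\<lambda>t. lam_can (\<gamma> t) (vector_derivative \<gamma> (at t)))"

definition sys_bd :: "pt set \<Rightarrow> real" where
  "sys_bd A = Inf {action \<gamma> T | \<gamma> T. closed_reeb_orbit (bdry_lift A) \<gamma> T}"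

text \<open>vol(partial X) = integral of lambda /\ d lambda = 2 area(A).\<close>
definition vol_bd :: "pt set \<Rightarrow> real" where
  "vol_bd A = 2 * measure lebesgue A"

definition rho_sys :: "pt set \<Rightarrow> real" where
  "rho_sys A = (sys_bd A)\<^sup>2 / vol_bd A"

end

theory Submission
  imports Defs "HOL-Library.Periodic_Fun"
begin

text \<open>
  For a nonzero lattice vector k let p maximise k \<bullet> z over U. Moving q straight in direction k
  while p rests at this boundary point, where k is an outer normal, is a closed Reeb orbit of action
  k \<bullet> p, so sys is at most the support function of the convex hull K at every nonzero lattice
  vector. It therefore suffices that some such k has support at most sqrt (2/3 area K).

  If not, the difference body K - K has support greater than 2 mu at every lattice vector, where
  mu = sqrt (2/3 area K). A transference inequality for planar symmetric convex bodies, proved by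
  normalising the body with unimodular maps and a case analysis of chords, then gives a lattice
  vector k with (3 mu / 2) k in K - K, i.e. a chord pq of K. The triangles over pq whose apexes
  are extremal for the functional orthogonal to k have total area greater than
  (3 mu / 4) (2 mu) = area K, a contradiction.
\<close>

lemma convex_level_crossing:
  fixes E :: "pt set"
  assumes "convex E" "(x1, y1) \<in> E" "(x2, y2) \<in> E" "y1 \<le> c" "c \<le> y2" "y1 < y2"
  shows "(x1 + (c - y1) / (y2 - y1) * (x2 - x1), c) \<in> E"
proof -
  define s where "s = (c - y1) / (y2 - y1)"
  have s: "0 \<le> s" "s \<le> 1" using assms by (auto simp: s_def divide_le_eq_1)
  have "(1 - s) *\<^sub>R (x1, y1) + s *\<^sub>R (x2, y2) \<in> E"
    using assms(1-3) s by (intro convexD) auto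
  moreover have "s * (y2 - y1) = c - y1"
    using assms(6) by (simp add: s_def)
  then have "(1 - s) *\<^sub>R (x1, y1) + s *\<^sub>R (x2, y2) = (x1 + s * (x2 - x1), c)"
    by (simp add: algebra_simps)
  ultimately show ?thesis by (simp add: s_def)
qed

lemma convex_level_crossing_le:
  fixes E :: "pt set"
  assumes "convex E" "(x1, y1) \<in> E" "(x2, y2) \<in> E" "y1 \<le> c" "c \<le> y2" "y1 < y2"
    and "\<And>x. (x, c) \<in> E \<Longrightarrow> x \<le> M"
  shows "(y2 - y1) * x1 + (c - y1) * (x2 - x1) \<le> (y2 - y1) * M"
proof -
  have "x1 + (c - y1) / (y2 - y1) * (x2 - x1) \<le> M"
    using assms(7) convex_level_crossing[OF assms(1-6)] .
  with assms(6) show ?thesis by (simp add: field_simps)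
qed

lemma convex_level_crossing_ge:
  fixes E :: "pt set"
  assumes "convex E" "(x1, y1) \<in> E" "(x2, y2) \<in> E" "y1 \<le> c" "c \<le> y2" "y1 < y2"
    and "\<And>x. (x, c) \<in> E \<Longrightarrow> M \<le> x"
  shows "(y2 - y1) * M \<le> (y2 - y1) * x1 + (c - y1) * (x2 - x1)"
proof -
  have "M \<le> x1 + (c - y1) / (y2 - y1) * (x2 - x1)"
    using assms(7) convex_level_crossing[OF assms(1-6)] .
  with assms(6) show ?thesis by (simp add: field_simps)
qed

text \<open>No nonzero lattice point has a proper dilate in E; for a convex body with 0 in its
  interior this says that E is admissible: its interior contains no nonzero lattice point.\<close>

definition lattice_admissible :: "pt set \<Rightarrow> bool" where
  "lattice_admissible E \<longleftrightarrow>
     (\<forall>i j::int. (i, j) \<noteq> (0, 0) \<longrightarrow> (\<forall>s>1. (s * of_int i, s * of_int j) \<notin> E))"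

lemma lattice_admissibleD:
  "lattice_admissible E \<Longrightarrow> (i, j) \<noteq> (0, 0) \<Longrightarrow> s > 1 \<Longrightarrow> (s * of_int i, s * of_int j) \<notin> E"
  unfolding lattice_admissible_def by blast

definition int_linear :: "int \<Rightarrow> int \<Rightarrow> int \<Rightarrow> int \<Rightarrow> pt \<Rightarrow> pt" where
  "int_linear a b c d = (\<lambda>(x, y). (of_int a * x + of_int b * y, of_int c * x + of_int d * y))"

lemma int_linear_apply [simp]:
  "int_linear a b c d (x, y) = (of_int a * x + of_int b * y, of_int c * x + of_int d * y)"
  by (simp add: int_linear_def)

lemma linear_int_linear: "linear (int_linear a b c d)"
  by (intro linearI) (auto simp: int_linear_def algebra_simps)

lemma lattice_admissible_int_linear_vimage:
  assumes "lattice_admissible E" and "a * d - b * c \<noteq> 0"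
  shows "lattice_admissible (int_linear a b c d -` E)"
  unfolding lattice_admissible_def
proof (intro allI impI)
  fix i j :: int and s :: real
  assume ij: "(i, j) \<noteq> (0, 0)" and s: "s > 1"
  have "(a * i + b * j, c * i + d * j) \<noteq> (0, 0)"
  proof
    assume "(a * i + b * j, c * i + d * j) = (0, 0)"
    moreover have "(a * d - b * c) * i = d * (a * i + b * j) - b * (c * i + d * j)"
      and "(a * d - b * c) * j = a * (c * i + d * j) - c * (a * i + b * j)"
      by (simp_all add: algebra_simps)
    ultimately have "(a * d - b * c) * i = 0" "(a * d - b * c) * j = 0"
      by simp_all
    with assms(2) ij show False by simp
  qed
  then have "(s * of_int (a * i + b * j), s * of_int (c * i + d * j)) \<notin> E"
    using lattice_admissibleD[OF assms(1) _ s] by blast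
  then show "(s * of_int i, s * of_int j) \<notin> int_linear a b c d -` E"
    by (simp add: algebra_simps)
qed

lemma chord_constraints_infeasible:
  fixes u w g t :: real
  assumes u: "0 < u" "u < 1" and w: "0 < w" "w < 1" and g: "g > 1/3"
    and I: "(1 - t) * (1 - u) > g / 3" and III: "(1 - w) * (t - g) > g / 3"
    and II: "u + w < 3 * u * w"
  shows False
proof -
  have "(1 - t) * (1 - u) > 0" "(1 - w) * (t - g) > 0"
    using I III g by simp_all
  then have "1 - t > 0" "t - g > 0"
    using u w by (simp_all add: zero_less_mult_iff)
  \<comment> \<open>in terms of s and r the constraints say 1/s + 1/r < 1, while s + r < 4 contradicts AM-GM\<close>
  define s where "s = 3 * (1 - t) / g - 1"
  define r where "r = 3 * (t - g) / g - 1"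
  have g0: "g > 0" using g by simp
  have "(1 - t) * (1 - u) < 1 - t" "(1 - w) * (t - g) < t - g"
    using \<open>1 - t > 0\<close> \<open>t - g > 0\<close> u w by simp_all
  then have s0: "s > 0" and r0: "r > 0"
    using I III g0 by (simp_all add: s_def r_def field_simps)
  have us: "(1 - u) * (s + 1) > 1" and wr: "(1 - w) * (r + 1) > 1"
    using I III g0 by (simp_all add: s_def r_def field_simps)
  have "s + r < 4" using g g0 by (simp add: s_def r_def field_simps)
  have "(s + 1) / s < 1 / u" using us u s0 by (simp add: field_simps)
  moreover have "(r + 1) / r < 1 / w" using wr w r0 by (simp add: field_simps)
  moreover have "1 / u + 1 / w < 3" using II u w by (simp add: field_simps)
  ultimately have "(s + 1) / s + (r + 1) / r < 3" by linarith
  then have "r + s < r * s" using s0 r0 by (simp add: field_simps)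
  moreover have "4 * (r * s) \<le> (r + s) * (r + s)"
    using zero_le_power2[of "r - s"] by (simp add: power2_eq_square algebra_simps)
  moreover have "(r + s) * (r + s) < 4 * (r + s)"
    using \<open>s + r < 4\<close> r0 s0 by (intro mult_strict_right_mono) auto
  ultimately show False by simp
qed

text \<open>Every admissible symmetric convex body through (1, 0) that rises above height 4/3 is brought
  into this normal form by a lattice shear fixing (1, 0).\<close>

locale normalized_admissible_body =
  fixes E :: "pt set" and t h :: real
  assumes convex: "convex E"
    and symmetric: "\<And>x y. (x, y) \<in> E \<Longrightarrow> (-x, -y) \<in> E"
    and admissible: "lattice_admissible E"
    and unit_point: "(1, 0) \<in> E"
    and high_point: "(t, h) \<in> E" and high: "h > 4/3"
    and unit_section: "\<And>x. (x, 1) \<in> E \<Longrightarrow> 0 \<le> x \<and> x \<le> 1"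
begin

lemma unit_section_bounds:
  assumes "(x, 1) \<in> E" shows "0 \<le> x" "x \<le> 1"
  using unit_section[OF assms] by auto

lemma section_0_bounds:
  assumes "(x, 0) \<in> E" shows "-1 \<le> x" "x \<le> 1"
proof -
  have le1: "x \<le> 1" if "(x, 0) \<in> E" for x
  proof (rule ccontr)
    assume "\<not> x \<le> 1"
    then have "(x * of_int 1, x * of_int 0) \<notin> E"
      by (intro lattice_admissibleD[OF admissible]) auto
    with that show False by simp
  qed
  show "x \<le> 1" using le1[OF assms] .
  show "-1 \<le> x" using le1[of "-x"] symmetric[OF assms] by simp
qed

lemma section_neg1_bounds:
  assumes "(x, -1) \<in> E" shows "-1 \<le> x" "x \<le> 0"
  using unit_section[of "-x"] symmetric[OF assms] by auto

lemma high_point_bounds: "h - 1 \<le> t" "t \<le> 1"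
proof -
  have "(-1, 0) \<in> E" using symmetric[OF unit_point] by simp
  from convex_level_crossing_ge[OF convex this high_point _ _ _ unit_section_bounds(1), of 1]
  show "h - 1 \<le> t" using high by (simp add: algebra_simps)
  from convex_level_crossing_le[OF convex unit_point high_point _ _ _ unit_section_bounds(2), of 1]
  show "t \<le> 1" using high by (simp add: algebra_simps)
qed

lemma far_point_not_below_axis:
  assumes A: "(a1, -u) \<in> E" and a1: "a1 > 4/3" and u: "0 < u" "u < 1"
  shows False
proof -
  have Am: "(-a1, u) \<in> E" using symmetric[OF A] by simp
  have "(h - u) * 0 \<le> (h - u) * (-a1) + (1 - u) * (t + a1)"
    using convex_level_crossing_ge[OF convex Am high_point _ _ _ unit_section_bounds(1), of 1]
      u high by simp
  then have "a1 * (h - 1) \<le> t * (1 - u)" by (simp add: algebra_simps)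
  moreover have "a1 * (h - 1) > 4/3 * (h - 1)"
    using a1 high by (intro mult_strict_right_mono) auto
  ultimately have P2: "t * (1 - u) > 4 * (h - 1) / 3" by simp
  have "(u + h) * (-1) \<le> (u + h) * (-t) + h * (t - a1)"
    using convex_level_crossing_ge[OF convex symmetric[OF high_point] Am _ _ _
        section_0_bounds(1), of 0] u high by simp
  then have "a1 * h \<le> h + u * (1 - t)" by (simp add: algebra_simps)
  moreover have "a1 * h > 4/3 * h" using a1 high by simp
  ultimately have P1: "u * (1 - t) > h / 3" by simp
  have "(4/9) * (4/9) \<le> (h / 3) * (4 * (h - 1) / 3)"
    using high by (intro mult_mono) auto
  also have "\<dots> < (u * (1 - t)) * (t * (1 - u))"
    using P1 P2 high by (intro mult_strict_mono) auto
  also have "\<dots> = (u * (1 - u)) * (t * (1 - t))" by simp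
  also have "\<dots> \<le> (1/4) * (1/4)"
  proof (rule mult_mono)
    show "u * (1 - u) \<le> 1/4" "t * (1 - t) \<le> 1/4"
      using zero_le_power2[of "u - 1/2"] zero_le_power2[of "t - 1/2"]
      by (simp_all add: power2_eq_square algebra_simps)
    show "0 \<le> (1/4::real)" "0 \<le> t * (1 - t)" using high_point_bounds high by auto
  qed
  finally show False by simp
qed

lemma far_point_height:
  assumes A: "(a1, a2) \<in> E" and a1: "a1 > 4/3"
  shows "0 < a2 \<and> a2 < 1"
proof -
  have "a2 \<noteq> 0" using section_0_bounds(2)[of a1] A a1 by auto
  moreover have "\<not> a2 \<ge> 1"
  proof
    assume "a2 \<ge> 1"
    with convex_level_crossing_le[OF convex unit_point A _ _ _ unit_section_bounds(2), of 1]
    show False using a1 by simp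
  qed
  moreover have "\<not> a2 \<le> -1"
  proof
    assume "a2 \<le> -1"
    have "(-1, 0) \<in> E" using symmetric[OF unit_point] by simp
    from convex_level_crossing_ge[OF convex this symmetric[OF A] _ _ _
        unit_section_bounds(1), of 1]
    show False using a1 \<open>a2 \<le> -1\<close> by simp
  qed
  moreover have "\<not> (-1 < a2 \<and> a2 < 0)"
    using far_point_not_below_axis[of a1 "-a2"] A a1 by auto
  ultimately show ?thesis by linarith
qed

text \<open>The unimodular involution (x, y) \<mapsto> (x - y, -y) preserves the normal form and exchanges
  the functionals x and x - y.\<close>

lemma reflection_normalized:
  "normalized_admissible_body (int_linear 1 (-1) 0 (-1) -` E) (h - t) h"
proof
  show "convex (int_linear 1 (-1) 0 (-1) -` E)"
    by (rule convex_linear_vimage[OF linear_int_linear convex])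
  show "lattice_admissible (int_linear 1 (-1) 0 (-1) -` E)"
    by (rule lattice_admissible_int_linear_vimage[OF admissible]) simp
  show "(-x, -y) \<in> int_linear 1 (-1) 0 (-1) -` E" if "(x, y) \<in> int_linear 1 (-1) 0 (-1) -` E"
    for x y
    using symmetric[of "x - y" "-y"] that by simp
  show "(x, 1) \<in> int_linear 1 (-1) 0 (-1) -` E \<Longrightarrow> 0 \<le> x \<and> x \<le> 1" for x
    using section_neg1_bounds[of "x - 1"] by simp
qed (use unit_point symmetric[OF high_point] high in simp_all)

lemma far_sheared_point_height:
  assumes "(b1, b2) \<in> E" and "b1 - b2 > 4/3"
  shows "-1 < b2 \<and> b2 < 0"
  using normalized_admissible_body.far_point_height[OF reflection_normalized, of "b1 - b2" "-b2"]
    assms by simp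

theorem support_bound:
  "(\<forall>x y. (x, y) \<in> E \<longrightarrow> x \<le> 4/3) \<or> (\<forall>x y. (x, y) \<in> E \<longrightarrow> x - y \<le> 4/3)"
proof (rule ccontr)
  assume "\<not> ?thesis"
  then obtain a1 a2 b1 b2 where A: "(a1, a2) \<in> E" "a1 > 4/3"
    and B: "(b1, b2) \<in> E" "b1 - b2 > 4/3"
    by auto
  define u where "u = a2"
  define w where "w = -b2"
  have u: "0 < u" "u < 1" using far_point_height[OF A] by (auto simp: u_def)
  have w: "0 < w" "w < 1" using far_sheared_point_height[OF B] by (auto simp: w_def)
  have Au: "(a1, u) \<in> E" using A by (simp add: u_def)
  have Bw: "(b1, -w) \<in> E" using B by (simp add: w_def)
  have "(h - u) * a1 + (1 - u) * (t - a1) \<le> (h - u) * 1"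
    using convex_level_crossing_le[OF convex Au high_point _ _ _ unit_section_bounds(2), of 1]
      u high by simp
  then have "(a1 - 1) * (h - 1) \<le> (1 - t) * (1 - u)" by (simp add: algebra_simps)
  moreover have "(a1 - 1) * (h - 1) > 1/3 * (h - 1)" using A high by simp
  ultimately have I: "(1 - t) * (1 - u) > (h - 1) / 3" by simp
  have "(u + w) * b1 + w * (a1 - b1) \<le> (u + w) * 1"
    using convex_level_crossing_le[OF convex Bw Au _ _ _ section_0_bounds(2), of 0] u w by simp
  then have "u * b1 + w * a1 \<le> u + w" by (simp add: algebra_simps)
  moreover have "u * b1 > u * (4/3 - w)" using B u by (simp add: w_def)
  moreover have "w * a1 > w * (4/3)" using A w by simp
  ultimately have II: "u + w < 3 * u * w" by (simp add: algebra_simps)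
  have "(h - w) * (-t) + (h - 1) * (b1 + t) \<le> (h - w) * 0"
    using convex_level_crossing_le[OF convex symmetric[OF high_point] Bw _ _ _
        section_neg1_bounds(2), of "-1"] w high by simp
  then have "b1 * (h - 1) \<le> t * (1 - w)" by (simp add: algebra_simps)
  moreover have "b1 * (h - 1) > (4/3 - w) * (h - 1)"
    using B high by (intro mult_strict_right_mono) (auto simp: w_def)
  moreover have "(1 - w) * (t - (h - 1)) = t * (1 - w) - (4/3 - w) * (h - 1) + (h - 1) / 3"
    by (simp add: field_simps)
  ultimately have III: "(1 - w) * (t - (h - 1)) > (h - 1) / 3" by linarith
  show False using chord_constraints_infeasible[OF u w _ I III II] high by simp
qed

end

lemma convex_horizontal_section:
  fixes E :: "pt set"
  assumes "convex E"
  shows "convex {x. (x, c) \<in> E}"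
proof (rule convexI)
  fix x y u v :: real
  assume "x \<in> {x. (x, c) \<in> E}" "y \<in> {x. (x, c) \<in> E}" "0 \<le> u" "0 \<le> v" "u + v = 1"
  then have "u *\<^sub>R (x, c) + v *\<^sub>R (y, c) \<in> E" using assms by (intro convexD) auto
  moreover have "u * c + v * c = c" using \<open>u + v = 1\<close> by (simp flip: distrib_right)
  ultimately show "u *\<^sub>R x + v *\<^sub>R y \<in> {x. (x, c) \<in> E}" by simp
qed

lemma convex_dilate_above_section:
  fixes E :: "pt set"
  assumes E: "convex E" and x1: "(x1, 1) \<in> E" and x2: "(x2, 1) \<in> E"
    and high: "(t, h) \<in> E" "h > 1" and n: "x1 < n" "n < x2"
  shows "\<exists>s>1. (s * n, s) \<in> E"
proof -
  \<comment> \<open>chosen so that (1 - \<delta>) (q \<delta>, 1) + \<delta> (t, h) lies on the ray through (n, 1)\<close>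
  define q where "q \<delta> = n + \<delta> * (n * h - t) / (1 - \<delta>)" for \<delta> :: real
  have "(q \<longlongrightarrow> n) (at_right 0)"
    unfolding q_def by (auto intro!: tendsto_eq_intros)
  then have "\<forall>\<^sub>F \<delta> in at_right 0. q \<delta> \<in> {x1<..<x2}"
    using n by (intro topological_tendstoD) auto
  moreover have "\<forall>\<^sub>F \<delta> in at_right 0. \<delta> \<in> {0<..<1::real}"
    by (rule eventually_at_right_real) simp
  ultimately obtain \<delta> where \<delta>: "x1 < q \<delta>" "q \<delta> < x2" "0 < \<delta>" "\<delta> < 1"
    using eventually_happens'[OF trivial_limit_at_right_real, OF eventually_conj] by fastforce
  have "is_interval {x. (x, 1) \<in> E}"
    using convex_horizontal_section[OF E] by (simp add: is_interval_convex_1)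
  then have "q \<delta> \<in> {x. (x, 1) \<in> E}"
    by (rule mem_is_interval_1_I[where a = x1 and c = x2]) (use x1 x2 \<delta> in auto)
  then have "(1 - \<delta>) *\<^sub>R (q \<delta>, 1) + \<delta> *\<^sub>R (t, h) \<in> E"
    using \<delta> by (intro convexD[OF E _ high(1)]) auto
  moreover have "(1 - \<delta>) *\<^sub>R (q \<delta>, 1) + \<delta> *\<^sub>R (t, h) = ((1 + \<delta> * (h - 1)) * n, 1 + \<delta> * (h - 1))"
  proof -
    have "(1 - \<delta>) * q \<delta> = (1 - \<delta>) * n + \<delta> * (n * h - t)"
      using \<delta> by (simp add: q_def field_simps)
    then show ?thesis by (simp add: algebra_simps)
  qed
  moreover have "1 + \<delta> * (h - 1) > 1" using \<delta> high by simp
  ultimately show ?thesis by metis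
qed

lemma admissible_section_unit_interval:
  fixes E :: "pt set"
  assumes E: "convex E" "lattice_admissible E" "bounded E" and high: "(t, h) \<in> E" "h > 1"
  obtains m :: int where "\<And>x. (x, 1) \<in> E \<Longrightarrow> of_int m \<le> x \<and> x \<le> of_int m + 1"
proof (cases "\<exists>x. (x, 1) \<in> E")
  case False
  then show ?thesis using that by blast
next
  case True
  define S where "S = {x. (x, 1) \<in> E}"
  have "S \<noteq> {}" using True by (simp add: S_def)
  obtain B where B: "\<And>z. z \<in> E \<Longrightarrow> norm z \<le> B" using E(3) by (auto simp: bounded_iff)
  have "bdd_below S"
  proof (rule bdd_belowI)
    fix x assume "x \<in> S"
    then have "norm (x, 1::real) \<le> B" using B by (auto simp: S_def)
    then show "-B \<le> x" using norm_fst_le[of x "1::real"] by simp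
  qed
  define m where "m = \<lfloor>Inf S\<rfloor>"
  have "of_int m \<le> x \<and> x \<le> of_int m + 1" if "x \<in> S" for x
  proof
    show "of_int m \<le> x"
      using cInf_lower[OF that \<open>bdd_below S\<close>] of_int_floor_le[of "Inf S"] unfolding m_def
      by linarith
    show "x \<le> of_int m + 1"
    proof (rule ccontr)
      assume "\<not> x \<le> of_int m + 1"
      obtain x1 where "x1 \<in> S" "x1 < of_int m + 1"
        using cInf_less_iff[OF \<open>S \<noteq> {}\<close> \<open>bdd_below S\<close>, of "of_int m + 1"] by (auto simp: m_def)
      then obtain s where "s > 1" "(s * of_int (m + 1), s) \<in> E"
        using convex_dilate_above_section[OF E(1) _ _ high, of x1 x "of_int (m + 1)"]
          \<open>x \<in> S\<close> \<open>\<not> x \<le> of_int m + 1\<close> by (auto simp: S_def)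
      moreover have "(s * of_int (m + 1), s * of_int 1) \<notin> E"
        by (rule lattice_admissibleD[OF E(2)]) (use \<open>s > 1\<close> in auto)
      ultimately show False by simp
    qed
  qed
  then show ?thesis using that by (auto simp: S_def)
qed

lemma admissible_unit_short_dual_vector:
  fixes E :: "pt set"
  assumes E: "convex E" "\<And>x y. (x, y) \<in> E \<Longrightarrow> (-x, -y) \<in> E" "lattice_admissible E" "bounded E"
    and unit_point: "(1, 0) \<in> E"
  shows "\<exists>i j::int. (i, j) \<noteq> (0, 0) \<and> (\<forall>x y. (x, y) \<in> E \<longrightarrow> of_int i * x + of_int j * y \<le> 4/3)"
proof (cases "\<forall>x y. (x, y) \<in> E \<longrightarrow> y \<le> 4/3")
  case True
  then show ?thesis by (intro exI[of _ 0] exI[of _ 1]) auto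
next
  case False
  then obtain t h where high: "(t, h) \<in> E" "h > 4/3" by (auto simp: not_le)
  obtain m where m: "\<And>x. (x, 1) \<in> E \<Longrightarrow> of_int m \<le> x \<and> x \<le> of_int m + 1"
    using admissible_section_unit_interval[OF E(1,3,4) high(1)] high(2) by auto
  \<comment> \<open>the shear fixes the lattice and (1, 0) and moves the section at height 1 into [0, 1]\<close>
  define E' where "E' = int_linear 1 m 0 1 -` E"
  have sheared: "(x - of_int m * y, y) \<in> E'" if "(x, y) \<in> E" for x y
    using that by (simp add: E'_def)
  have "normalized_admissible_body E' (t - of_int m * h) h"
  proof
    show "convex E'" unfolding E'_def by (rule convex_linear_vimage[OF linear_int_linear E(1)])
    show "lattice_admissible E'"
      unfolding E'_def by (rule lattice_admissible_int_linear_vimage[OF E(3)]) simp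
    show "(-x, -y) \<in> E'" if "(x, y) \<in> E'" for x y
      using E(2)[of "x + of_int m * y" y] that by (simp add: E'_def)
    show "0 \<le> x \<and> x \<le> 1" if "(x, 1) \<in> E'" for x
      using m[of "x + of_int m"] that by (simp add: E'_def)
    show "(1, 0) \<in> E'" using sheared[OF unit_point] by simp
    show "(t - of_int m * h, h) \<in> E'" using sheared[OF high(1)] .
    show "h > 4/3" by (rule high(2))
  qed
  then consider "\<forall>x y. (x, y) \<in> E' \<longrightarrow> x \<le> 4/3" | "\<forall>x y. (x, y) \<in> E' \<longrightarrow> x - y \<le> 4/3"
    using normalized_admissible_body.support_bound by blast
  then show ?thesis
  proof cases
    case 1
    have "of_int 1 * x + of_int (-m) * y \<le> 4/3" if "(x, y) \<in> E" for x y
    proof -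
      have "x - of_int m * y \<le> 4/3" using 1 sheared[OF that] by blast
      then show ?thesis by simp
    qed
    then show ?thesis by (intro exI[of _ 1] exI[of _ "-m"]) auto
  next
    case 2
    have "of_int 1 * x + of_int (-m - 1) * y \<le> 4/3" if "(x, y) \<in> E" for x y
    proof -
      have "(x - of_int m * y) - y \<le> 4/3" using 2 sheared[OF that] by blast
      then show ?thesis by (simp add: algebra_simps)
    qed
    then show ?thesis by (intro exI[of _ 1] exI[of _ "-m - 1"]) auto
  qed
qed

lemma lattice_admissible_coprime:
  assumes E: "lattice_admissible E" and ij: "(i, j) \<noteq> (0, 0)" and "(of_int i, of_int j) \<in> E"
  shows "coprime i j"
proof (rule ccontr)
  assume "\<not> coprime i j"
  define d where "d = gcd i j"
  have "d > 0" using ij by (auto simp: d_def gcd_pos_int)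
  moreover have "d \<noteq> 1" using \<open>\<not> coprime i j\<close> by (simp add: d_def coprime_iff_gcd_eq_1)
  ultimately have "d > 1" by linarith
  obtain i' j' where "i = d * i'" "j = d * j'"
    unfolding d_def by (meson dvdE gcd_dvd1 gcd_dvd2)
  then have "(i', j') \<noteq> (0, 0)" "(of_int d * of_int i', of_int d * of_int j') \<in> E"
    using ij \<open>(of_int i, of_int j) \<in> E\<close> by auto
  with lattice_admissibleD[OF E] \<open>d > 1\<close> show False by simp
qed

lemma int_linear_unimodular_inverse:
  assumes "a * d - b * c = 1"
  shows "int_linear a b c d (int_linear d (-b) (-c) a z) = z"
proof (cases z)
  case (Pair x y)
  have det: "real_of_int a * of_int d - of_int b * of_int c = 1"
    using arg_cong[OF assms, of real_of_int] by simp
  have "of_int a * (of_int d * x - of_int b * y) + of_int b * (of_int a * y - of_int c * x)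
      = (real_of_int a * of_int d - of_int b * of_int c) * x"
    "of_int c * (of_int d * x - of_int b * y) + of_int d * (of_int a * y - of_int c * x)
      = (real_of_int a * of_int d - of_int b * of_int c) * y"
    by (simp_all add: algebra_simps)
  then show ?thesis using det by (simp add: Pair)
qed

lemma admissible_short_dual_vector:
  fixes E :: "pt set"
  assumes E: "convex E" "\<And>x y. (x, y) \<in> E \<Longrightarrow> (-x, -y) \<in> E" "lattice_admissible E" "bounded E"
    and "(i0, j0) \<noteq> (0, 0)" and lattice_point: "(of_int i0, of_int j0) \<in> E"
  shows "\<exists>i j::int. (i, j) \<noteq> (0, 0) \<and> (\<forall>x y. (x, y) \<in> E \<longrightarrow> of_int i * x + of_int j * y \<le> 4/3)"
proof -
  have "coprime i0 j0"
    by (rule lattice_admissible_coprime[OF E(3) \<open>(i0, j0) \<noteq> (0, 0)\<close> lattice_point])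
  then obtain a b where "a * i0 + b * j0 = 1"
    using bezout_int[of i0 j0] by (auto simp: coprime_iff_gcd_eq_1)
  then have det: "i0 * a - (-b) * j0 = 1" "a * i0 - b * (-j0) = 1" by (simp_all add: mult.commute)
  \<comment> \<open>a lattice basis with first vector (i0, j0), so that (1, 0) \<in> E'\<close>
  define M where "M = int_linear i0 (-b) j0 a"
  define M' where "M' = int_linear a b (-j0) i0"
  have M_M': "M (M' w) = w" and M'_M: "M' (M w) = w" for w
    using int_linear_unimodular_inverse[OF det(1), of w] int_linear_unimodular_inverse[OF det(2), of w]
    by (simp_all add: M_def M'_def)
  define E' where "E' = M -` E"
  have E'_convex: "convex E'"
    unfolding E'_def M_def by (rule convex_linear_vimage[OF linear_int_linear E(1)])
  have E'_symmetric: "(-x, -y) \<in> E'" if "(x, y) \<in> E'" for x y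
  proof -
    obtain u v where uv: "M (x, y) = (u, v)" by fastforce
    have "M (-x, -y) = (-u, -v)" using uv by (simp add: M_def algebra_simps)
    with E(2)[of u v] that uv show ?thesis by (simp add: E'_def)
  qed
  have E'_admissible: "lattice_admissible E'"
    unfolding E'_def M_def by (rule lattice_admissible_int_linear_vimage[OF E(3)]) (use det in simp)
  have E'_bounded: "bounded E'"
  proof (rule bounded_subset)
    show "bounded (M' ` E)"
      using E(4) linear_int_linear unfolding M'_def by (simp add: bounded_linear_image linear_conv_bounded_linear)
    show "E' \<subseteq> M' ` E" unfolding E'_def using M'_M by (metis image_eqI subsetI vimageE)
  qed
  have "(1, 0) \<in> E'" using lattice_point by (simp add: E'_def M_def)
  then obtain k l :: int where "(k, l) \<noteq> (0, 0)"
    and short: "\<forall>x y. (x, y) \<in> E' \<longrightarrow> of_int k * x + of_int l * y \<le> 4/3"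
    using admissible_unit_short_dual_vector[OF E'_convex E'_symmetric E'_admissible E'_bounded]
    by blast
  define I where "I = k * a - l * j0"
  define J where "J = k * b + l * i0"
  have "I * i0 + J * j0 = k * (a * i0 + b * j0)" "J * a - I * b = l * (a * i0 + b * j0)"
    by (simp_all add: I_def J_def algebra_simps)
  then have "(I, J) \<noteq> (0, 0)"
    using \<open>a * i0 + b * j0 = 1\<close> \<open>(k, l) \<noteq> (0, 0)\<close> by auto
  moreover have "of_int I * x + of_int J * y \<le> 4/3" if "(x, y) \<in> E" for x y
  proof -
    have "M' (x, y) \<in> E'" using that M_M' by (simp add: E'_def)
    then have "of_int k * fst (M' (x, y)) + of_int l * snd (M' (x, y)) \<le> 4/3"
      using short by (cases "M' (x, y)") auto
    then show ?thesis by (simp add: M'_def I_def J_def algebra_simps)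
  qed
  ultimately show ?thesis by blast
qed

text \<open>For D star-shaped about 0, 1 / radial_extent D v is the Minkowski gauge of D at v.\<close>

definition radial_extent :: "'a::real_normed_vector set \<Rightarrow> 'a \<Rightarrow> real" where
  "radial_extent D v = Sup {s. 0 \<le> s \<and> s *\<^sub>R v \<in> D}"

lemma radial_extent:
  fixes D :: "'a::real_normed_vector set"
  assumes "compact D" "0 \<in> D" "v \<noteq> 0"
  shows radial_extent_nonneg: "0 \<le> radial_extent D v"
    and radial_extent_in: "radial_extent D v *\<^sub>R v \<in> D"
    and radial_extent_upper: "0 \<le> s \<Longrightarrow> s *\<^sub>R v \<in> D \<Longrightarrow> s \<le> radial_extent D v"
proof -
  define A where "A = {s. 0 \<le> s \<and> s *\<^sub>R v \<in> D}"
  obtain R where R: "\<And>z. z \<in> D \<Longrightarrow> norm z \<le> R"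
    using compact_imp_bounded[OF assms(1)] by (auto simp: bounded_iff)
  have "bdd_above A"
  proof (rule bdd_aboveI)
    fix s assume "s \<in> A"
    then have s: "0 \<le> s" "s *\<^sub>R v \<in> D" by (auto simp: A_def)
    have "s * norm v \<le> R" using R[OF s(2)] s(1) by simp
    then show "s \<le> R / norm v" using assms(3) by (simp add: field_simps)
  qed
  have "A = {0..} \<inter> (\<lambda>s. s *\<^sub>R v) -` D" by (auto simp: A_def)
  then have "closed A"
    using compact_imp_closed[OF assms(1)] by (auto intro!: closed_Int continuous_closed_vimage)
  moreover have "A \<noteq> {}" using assms(2) by (auto simp: A_def intro!: exI[of _ 0])
  ultimately have "Sup A \<in> A" using closed_contains_Sup \<open>bdd_above A\<close> by blast
  then show "0 \<le> radial_extent D v" "radial_extent D v *\<^sub>R v \<in> D"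
    by (auto simp: radial_extent_def A_def)
  show "0 \<le> s \<Longrightarrow> s *\<^sub>R v \<in> D \<Longrightarrow> s \<le> radial_extent D v"
    using cSup_upper[OF _ \<open>bdd_above A\<close>] by (auto simp: radial_extent_def A_def)
qed

lemma radial_extent_lt_of_norm_gt:
  fixes D :: "'a::real_normed_vector set"
  assumes D: "compact D" "0 \<in> D" "v \<noteq> 0" and R: "\<And>z. z \<in> D \<Longrightarrow> norm z \<le> R"
    and "c > 0" "R / c < norm v"
  shows "radial_extent D v < c"
proof (rule ccontr)
  assume "\<not> radial_extent D v < c"
  then have "c * norm v \<le> radial_extent D v * norm v" by (simp add: mult_right_mono)
  also have "\<dots> \<le> R"
    using R[OF radial_extent_in[OF D]] radial_extent_nonneg[OF D] by simp
  finally show False using \<open>c > 0\<close> \<open>R / c < norm v\<close> by (simp add: field_simps)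
qed

lemma norm_int_pair_gt:
  assumes "N < \<bar>i\<bar> \<or> N < \<bar>j\<bar>"
  shows "of_int N < norm (real_of_int i, real_of_int j)"
proof -
  have "of_int N < \<bar>real_of_int i\<bar> \<or> of_int N < \<bar>real_of_int j\<bar>"
    using assms by (metis of_int_abs of_int_less_iff)
  then show ?thesis
    using norm_fst_le[of "real_of_int i" "real_of_int j"] norm_snd_le[of "real_of_int j" "real_of_int i"]
    by auto
qed

lemma radial_extent_lattice_max:
  fixes D :: "pt set"
  assumes D: "compact D" and r: "r > 0" "ball 0 r \<subseteq> D"
  obtains i0 j0 :: int where "(i0, j0) \<noteq> (0, 0)" "r / 2 \<le> radial_extent D (of_int i0, of_int j0)"
    "\<And>i j. (i, j) \<noteq> (0, 0) \<Longrightarrow>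
       radial_extent D (of_int i, of_int j) \<le> radial_extent D (of_int i0, of_int j0)"
proof -
  define \<rho> where "\<rho> p = radial_extent D (of_int (fst p), of_int (snd p))" for p :: "int \<times> int"
  have "0 \<in> D" using r by auto
  obtain R where R: "\<And>z. z \<in> D \<Longrightarrow> norm z \<le> R"
    using compact_imp_bounded[OF D] by (auto simp: bounded_iff)
  define N where "N = \<lceil>R / (r / 2)\<rceil> + 1"
  have "0 \<le> R / (r / 2)" using R[OF \<open>0 \<in> D\<close>] r by simp
  define F where "F = {-N..N} \<times> {-N..N} - {(0, 0)}"
  have "N \<ge> 1" using \<open>0 \<le> R / (r / 2)\<close> by (simp add: N_def)
  then have "finite F" "(1, 0) \<in> F" by (simp_all add: F_def)
  have unit_extent: "r / 2 \<le> \<rho> (1, 0)"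
  proof -
    have "(r / 2) *\<^sub>R (1, 0) \<in> D" using r by (auto simp: zero_prod_def dist_Pair_Pair)
    then show ?thesis
      unfolding \<rho>_def using radial_extent_upper[OF D \<open>0 \<in> D\<close>, of "(1, 0)" "r / 2"] r
      by (simp add: zero_prod_def)
  qed
  have outside_short: "\<rho> p < r / 2" if "p \<notin> F" "p \<noteq> (0, 0)" for p
  proof -
    have "R / (r / 2) \<le> of_int N" unfolding N_def by linarith
    also have "of_int N < norm (real_of_int (fst p), real_of_int (snd p))"
      using that by (intro norm_int_pair_gt) (cases p; auto simp: F_def)
    finally show ?thesis
      unfolding \<rho>_def using that(2) r(1)
      by (intro radial_extent_lt_of_norm_gt[OF D \<open>0 \<in> D\<close> _ R]) (auto simp: zero_prod_def prod_eq_iff)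
  qed
  have "Max (\<rho> ` F) \<in> \<rho> ` F" using \<open>finite F\<close> \<open>(1, 0) \<in> F\<close> by (intro Max_in) auto
  then obtain p0 where p0: "p0 \<in> F" "\<rho> p0 = Max (\<rho> ` F)" by auto
  have p0_max: "\<rho> p \<le> \<rho> p0" if "p \<noteq> (0, 0)" for p
  proof (cases "p \<in> F")
    case True
    then show ?thesis using \<open>finite F\<close> p0(2) by auto
  next
    case False
    have "\<rho> (1, 0) \<le> \<rho> p0" using \<open>finite F\<close> \<open>(1, 0) \<in> F\<close> p0(2) by auto
    then show ?thesis using outside_short[OF False that] unit_extent by linarith
  qed
  show ?thesis
  proof (rule that[of "fst p0" "snd p0"])
    show "(fst p0, snd p0) \<noteq> (0, 0)" using p0(1) by (simp add: F_def)
    show "r / 2 \<le> radial_extent D (of_int (fst p0), of_int (snd p0))"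
      using unit_extent p0_max[of "(1, 0)"] by (simp add: \<rho>_def)
    show "radial_extent D (of_int i, of_int j) \<le> radial_extent D (of_int (fst p0), of_int (snd p0))"
      if "(i, j) \<noteq> (0, 0)" for i j
      using p0_max[OF that] by (simp add: \<rho>_def)
  qed
qed

text \<open>1 / \<tau> is the first successive minimum of D with respect to the integer lattice.\<close>

lemma maximal_lattice_dilate:
  fixes D :: "pt set"
  assumes D: "compact D" and r: "r > 0" "ball 0 r \<subseteq> D"
  obtains \<tau> i0 j0 where "\<tau> > 0" "(i0, j0) \<noteq> (0, 0)" "(\<tau> * of_int i0, \<tau> * of_int j0) \<in> D"
    "lattice_admissible ((*\<^sub>R) \<tau> -` D)"
proof -
  obtain i0 j0 :: int where "(i0, j0) \<noteq> (0, 0)"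
    and unit: "r / 2 \<le> radial_extent D (of_int i0, of_int j0)"
    and max: "\<And>i j. (i, j) \<noteq> (0, 0) \<Longrightarrow>
      radial_extent D (of_int i, of_int j) \<le> radial_extent D (of_int i0, of_int j0)"
    using radial_extent_lattice_max[OF D r] by metis
  define \<tau> where "\<tau> = radial_extent D (of_int i0, of_int j0)"
  have "0 \<in> D" using r by auto
  have lattice_nonzero: "(of_int i, of_int j) \<noteq> (0::pt)" if "(i, j) \<noteq> (0, 0)" for i j :: int
    using that by (auto simp: zero_prod_def)
  have "\<tau> > 0" using unit r by (simp add: \<tau>_def)
  moreover have "(\<tau> * of_int i0, \<tau> * of_int j0) \<in> D"
    using radial_extent_in[OF D \<open>0 \<in> D\<close> lattice_nonzero[OF \<open>(i0, j0) \<noteq> (0, 0)\<close>]]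
    by (simp add: \<tau>_def)
  moreover have "lattice_admissible ((*\<^sub>R) \<tau> -` D)"
    unfolding lattice_admissible_def
  proof (intro allI impI notI)
    fix i j :: int and s :: real
    assume ij: "(i, j) \<noteq> (0, 0)" and "s > 1" and "(s * of_int i, s * of_int j) \<in> (*\<^sub>R) \<tau> -` D"
    then have "(\<tau> * s) *\<^sub>R (of_int i, of_int j) \<in> D" by (simp add: mult.assoc)
    then have "\<tau> * s \<le> radial_extent D (of_int i, of_int j)"
      using radial_extent_upper[OF D \<open>0 \<in> D\<close> lattice_nonzero[OF ij]] \<open>\<tau> > 0\<close> \<open>s > 1\<close> by simp
    then show False
      using max[OF ij] mult_strict_left_mono[OF \<open>s > 1\<close> \<open>\<tau> > 0\<close>] by (simp add: \<tau>_def)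
  qed
  ultimately show ?thesis using that \<open>(i0, j0) \<noteq> (0, 0)\<close> by blast
qed

text \<open>A transference inequality: the first successive minima of D and of its polar body have
  product at most 4/3.\<close>

theorem symmetric_body_lattice_dilate:
  fixes D :: "pt set" and c :: real
  assumes D: "convex D" "\<And>x y. (x, y) \<in> D \<Longrightarrow> (-x, -y) \<in> D" "compact D"
    and r: "r > 0" "ball 0 r \<subseteq> D" and "c > 0"
    and wide: "\<And>i j::int. (i, j) \<noteq> (0, 0) \<Longrightarrow> \<exists>x y. (x, y) \<in> D \<and> of_int i * x + of_int j * y > c"
  shows "\<exists>i j::int. (i, j) \<noteq> (0, 0) \<and> (3 * c / 4 * of_int i, 3 * c / 4 * of_int j) \<in> D"
proof -
  obtain \<tau> i0 j0 where "\<tau> > 0" and "(i0, j0) \<noteq> (0, 0)"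
    and \<tau>_point: "(\<tau> * of_int i0, \<tau> * of_int j0) \<in> D"
    and admissible: "lattice_admissible ((*\<^sub>R) \<tau> -` D)"
    using maximal_lattice_dilate[OF D(3) r] by blast
  have "3 * c / 4 \<le> \<tau>"
  proof (rule ccontr)
    assume "\<not> 3 * c / 4 \<le> \<tau>"
    define D' where "D' = (*\<^sub>R) \<tau> -` D"
    have D'_convex: "convex D'"
      unfolding D'_def by (rule convex_linear_vimage[OF _ D(1)]) (simp add: linearI scaleR_add_right)
    have D'_symmetric: "(-x, -y) \<in> D'" if "(x, y) \<in> D'" for x y
      using D(2) that by (simp add: D'_def)
    have D'_bounded: "bounded D'"
    proof (rule bounded_subset)
      show "bounded ((\<lambda>z. (1 / \<tau>) *\<^sub>R z) ` D)"
        by (rule bounded_scaling[OF compact_imp_bounded[OF D(3)]])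
      show "D' \<subseteq> (\<lambda>z. (1 / \<tau>) *\<^sub>R z) ` D"
        using \<open>\<tau> > 0\<close> by (auto simp: D'_def image_iff intro!: bexI[of _ "\<tau> *\<^sub>R _"])
    qed
    have "(of_int i0, of_int j0) \<in> D'" using \<tau>_point by (simp add: D'_def)
    then obtain i j :: int where "(i, j) \<noteq> (0, 0)"
      and short: "\<forall>x y. (x, y) \<in> D' \<longrightarrow> of_int i * x + of_int j * y \<le> 4/3"
      using admissible_short_dual_vector[OF D'_convex D'_symmetric _ D'_bounded \<open>(i0, j0) \<noteq> (0, 0)\<close>]
        admissible unfolding D'_def by blast
    obtain p q where "(p, q) \<in> D" "of_int i * p + of_int j * q > c"
      using wide[OF \<open>(i, j) \<noteq> (0, 0)\<close>] by blast
    have "(p / \<tau>, q / \<tau>) \<in> D'" using \<open>(p, q) \<in> D\<close> \<open>\<tau> > 0\<close> by (simp add: D'_def)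
    then have "of_int i * (p / \<tau>) + of_int j * (q / \<tau>) \<le> 4/3" using short by blast
    then have "of_int i * p + of_int j * q \<le> 4/3 * \<tau>"
      using \<open>\<tau> > 0\<close> by (simp add: field_simps)
    with \<open>of_int i * p + of_int j * q > c\<close> \<open>\<not> 3 * c / 4 \<le> \<tau>\<close> show False by simp
  qed
  define \<theta> where "\<theta> = 3 * c / 4 / \<tau>"
  have "0 \<le> \<theta>" "\<theta> \<le> 1" using \<open>3 * c / 4 \<le> \<tau>\<close> \<open>c > 0\<close> \<open>\<tau> > 0\<close> by (auto simp: \<theta>_def)
  have "0 \<in> D" using r by auto
  then have "(1 - \<theta>) *\<^sub>R 0 + \<theta> *\<^sub>R (\<tau> * of_int i0, \<tau> * of_int j0) \<in> D"
    using \<open>0 \<le> \<theta>\<close> \<open>\<theta> \<le> 1\<close> by (intro convexD[OF D(1) _ \<tau>_point]) auto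
  moreover have "\<theta> * \<tau> = 3 * c / 4" using \<open>\<tau> > 0\<close> by (simp add: \<theta>_def)
  ultimately have "(3 * c / 4 * of_int i0, 3 * c / 4 * of_int j0) \<in> D"
    by (simp add: mult.assoc[symmetric])
  then show ?thesis using \<open>(i0, j0) \<noteq> (0, 0)\<close> by blast
qed

definition det2 :: "pt \<Rightarrow> pt \<Rightarrow> real" where
  "det2 u v = fst u * snd v - snd u * fst v"

definition pt_of_vec :: "real^2 \<Rightarrow> pt" where
  "pt_of_vec x = (x $ 1, x $ 2)"

definition vec_of_pt :: "pt \<Rightarrow> real^2" where
  "vec_of_pt z = vector [fst z, snd z]"

lemma pt_of_vec_of_pt [simp]: "pt_of_vec (vec_of_pt z) = z"
  by (simp add: pt_of_vec_def vec_of_pt_def)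

lemma vec_of_pt_of_vec [simp]: "vec_of_pt (pt_of_vec x) = x"
  unfolding pt_of_vec_def vec_of_pt_def by (simp add: vec_eq_iff forall_2)

lemma linear_pt_of_vec: "linear pt_of_vec"
  by (intro linearI) (auto simp: pt_of_vec_def)

lemma pt_of_vec_measurable [measurable]: "pt_of_vec \<in> borel_measurable borel"
  unfolding pt_of_vec_def by (intro borel_measurable_continuous_onI continuous_intros)

text \<open>The library computes areas of triangles only in real^2; pt_of_vec transports
  them to pairs.\<close>

lemma lborel_pt_distr: "(lborel :: pt measure) = distr lborel borel pt_of_vec"
proof (rule lborel_eqI)
  fix l u :: pt
  assume le: "\<And>b. b \<in> Basis \<Longrightarrow> l \<bullet> b \<le> u \<bullet> b"
  have inner_vec: "vec_of_pt z \<bullet> axis i 1 = (if i = 1 then fst z else snd z)" for z and i :: 2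
    using exhaust_2[of i] by (auto simp: cart_eq_inner_axis[symmetric] vec_of_pt_def)
  have basis_vec: "(Basis :: (real^2) set) = {axis 1 1, axis 2 1}"
    by (auto simp: Basis_vec_def UNIV_2)
  have "pt_of_vec -` box l u = box (vec_of_pt l) (vec_of_pt u)"
    by (auto simp: box_def basis_vec Basis_prod_def inner_vec pt_of_vec_def vec_of_pt_def
        inner_prod_def cart_eq_inner_axis[symmetric])
  moreover have "\<forall>b\<in>Basis. vec_of_pt l \<bullet> b \<le> vec_of_pt u \<bullet> b"
    using le[of "(1, 0)"] le[of "(0, 1)"] by (auto simp: basis_vec inner_vec Basis_prod_def inner_prod_def)
  moreover have "(\<Prod>b\<in>Basis. (vec_of_pt u - vec_of_pt l) \<bullet> b) = (\<Prod>b\<in>Basis. (u - l) \<bullet> b)"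
    by (simp add: basis_vec axis_eq_axis inner_diff_left inner_vec Basis_prod_def inner_prod_def)
  ultimately show "emeasure (distr lborel borel pt_of_vec) (box l u) = (\<Prod>b\<in>Basis. (u - l) \<bullet> b)"
    by (simp add: emeasure_distr emeasure_lborel_box_eq)
qed simp

lemma measure_triangle:
  fixes A B C :: pt
  shows "measure lebesgue (convex hull {A, B, C}) = \<bar>det2 (B - A) (C - A)\<bar> / 2"
proof -
  define T where "T = convex hull {vec_of_pt A, vec_of_pt B, vec_of_pt C}"
  have "compact T" unfolding T_def by (intro finite_imp_compact_convex_hull) auto
  have image: "pt_of_vec ` T = convex hull {A, B, C}"
    unfolding T_def by (simp add: convex_hull_linear_image[OF linear_pt_of_vec])
  have "closed (pt_of_vec ` T)"
    using \<open>compact T\<close> linear_pt_of_vec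
    by (intro compact_imp_closed compact_continuous_image linear_continuous_on)
       (auto simp: linear_conv_bounded_linear)
  have preimage: "pt_of_vec -` (pt_of_vec ` T) = T"
    by (auto simp: image_iff) (metis vec_of_pt_of_vec)
  have "measure lebesgue (pt_of_vec ` T) = measure lborel (pt_of_vec ` T)"
    using \<open>closed (pt_of_vec ` T)\<close>
    by (intro measure_completion) auto
  also have "\<dots> = measure (distr lborel borel pt_of_vec) (pt_of_vec ` T)"
    by (simp flip: lborel_pt_distr)
  also have "\<dots> = measure lborel T"
    using \<open>closed (pt_of_vec ` T)\<close> by (subst measure_distr) (auto simp: preimage)
  also have "\<dots> = \<bar>det2 (B - A) (C - A)\<bar> / 2"
    unfolding T_def content_triangle by (simp add: vec_of_pt_def det2_def abs_minus_commute algebra_simps)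
  finally show ?thesis using image by simp
qed

lemma det2_scaleR_left: "det2 (c *\<^sub>R u) v = c * det2 u v"
  by (simp add: det2_def algebra_simps)

lemma det2_diff_right: "det2 u (v - w) = det2 u v - det2 u w"
  by (simp add: det2_def algebra_simps)

lemma convex_measure_ge_triangles:
  fixes K :: "pt set"
  assumes K: "convex K" "compact K" and pts: "p \<in> K" "q \<in> K" "a \<in> K" "b \<in> K"
    and sides: "det2 (p - q) (b - q) \<le> 0" "0 \<le> det2 (p - q) (a - q)"
  shows "(det2 (p - q) (a - q) - det2 (p - q) (b - q)) / 2 \<le> measure lebesgue K"
proof (cases "p = q")
  case True
  then show ?thesis by (simp add: det2_def)
next
  case False
  define n where "n = (- snd (p - q), fst (p - q))"
  have det2_inner: "det2 (p - q) (z - q) = n \<bullet> z - n \<bullet> q" for z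
    by (simp add: det2_def n_def inner_prod_def algebra_simps)
  have "det2 (p - q) (p - q) = 0" by (simp add: det2_def)
  define T1 where "T1 = convex hull {q, p, a}"
  define T2 where "T2 = convex hull {q, p, b}"
  have "T1 \<subseteq> K" "T2 \<subseteq> K"
    unfolding T1_def T2_def using pts by (intro hull_minimal K(1); auto)+
  have T_meas: "T1 \<in> lmeasurable" "T2 \<in> lmeasurable"
    unfolding T1_def T2_def by (auto intro!: lmeasurable_compact finite_imp_compact_convex_hull)
  have "T1 \<subseteq> {z. n \<bullet> q \<le> n \<bullet> z}"
    unfolding T1_def using sides \<open>det2 (p - q) (p - q) = 0\<close> det2_inner[of p] det2_inner[of a]
    by (intro hull_minimal convex_halfspace_ge) auto
  moreover have "T2 \<subseteq> {z. n \<bullet> z \<le> n \<bullet> q}"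
    unfolding T2_def using sides \<open>det2 (p - q) (p - q) = 0\<close> det2_inner[of p] det2_inner[of b]
    by (intro hull_minimal convex_halfspace_le) auto
  ultimately have "T1 \<inter> T2 \<subseteq> {z. n \<bullet> z = n \<bullet> q}" by fastforce
  moreover have "n \<noteq> 0" using False by (auto simp: n_def prod_eq_iff)
  ultimately have "negligible (T1 \<inter> T2)"
    using negligible_hyperplane negligible_subset by blast
  then have "measure lebesgue (T1 \<union> T2) = measure lebesgue T1 + measure lebesgue T2"
    using measure_Un3_negligible[of T1 T2 "{}" "T1 \<union> T2"] T_meas by auto
  moreover have "measure lebesgue (T1 \<union> T2) \<le> measure lebesgue K"
    using \<open>T1 \<subseteq> K\<close> \<open>T2 \<subseteq> K\<close> T_meas K(2) by (intro measure_mono_fmeasurable lmeasurable_compact) auto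
  moreover have "measure lebesgue T1 = det2 (p - q) (a - q) / 2"
    "measure lebesgue T2 = - det2 (p - q) (b - q) / 2"
    using sides unfolding T1_def T2_def measure_triangle by auto
  ultimately show ?thesis by (simp add: diff_divide_distrib)
qed

lemma lattice_chord_of_wide_body:
  fixes K :: "pt set"
  assumes K: "convex K" "compact K" and r: "r > 0" "ball 0 r \<subseteq> K" and "\<mu> > 0"
    and wide: "\<And>i j::int. (i, j) \<noteq> (0, 0) \<Longrightarrow> \<exists>x y. (x, y) \<in> K \<and> of_int i * x + of_int j * y > \<mu>"
  obtains i j :: int and p q :: pt
  where "(i, j) \<noteq> (0, 0)" "p \<in> K" "q \<in> K" "p - q = (3 * \<mu> / 2) *\<^sub>R (of_int i, of_int j)"
proof -
  define D where "D = (\<Union>x\<in>K. \<Union>y\<in>K. {x - y})"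
  have "(-x, -y) \<in> D" if xy: "(x, y) \<in> D" for x y
  proof -
    obtain u v where "u \<in> K" "v \<in> K" "(x, y) = u - v" using xy unfolding D_def by blast
    then have "(-x, -y) = v - u" by (metis minus_diff_eq uminus_Pair)
    with \<open>u \<in> K\<close> \<open>v \<in> K\<close> show ?thesis unfolding D_def by blast
  qed
  moreover have "ball 0 r \<subseteq> D"
  proof -
    have "0 \<in> K" using r by auto
    then show ?thesis using r(2) unfolding D_def by force
  qed
  moreover have "\<exists>x y. (x, y) \<in> D \<and> of_int i * x + of_int j * y > 2 * \<mu>"
    if ij: "(i, j) \<noteq> (0, 0)" for i j :: int
  proof -
    obtain x1 y1 where 1: "(x1, y1) \<in> K" "of_int i * x1 + of_int j * y1 > \<mu>"
      using wide[OF ij] by blast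
    obtain x2 y2 where 2: "(x2, y2) \<in> K" "of_int (-i) * x2 + of_int (-j) * y2 > \<mu>"
      using wide[of "-i" "-j"] ij by auto
    have "(x1 - x2, y1 - y2) \<in> D" using 1 2 unfolding D_def by force
    moreover have "of_int i * (x1 - x2) + of_int j * (y1 - y2) > 2 * \<mu>"
      using 1 2 by (simp add: algebra_simps)
    ultimately show ?thesis by blast
  qed
  ultimately obtain i j :: int where "(i, j) \<noteq> (0, 0)"
    and "(3 * (2 * \<mu>) / 4 * of_int i, 3 * (2 * \<mu>) / 4 * of_int j) \<in> D"
    using symmetric_body_lattice_dilate[of D r "2 * \<mu>"] \<open>\<mu> > 0\<close> r(1) K
    unfolding D_def by (auto simp: convex_differences compact_differences')
  then obtain p q where "p \<in> K" "q \<in> K"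
    and "p - q = (3 * (2 * \<mu>) / 4 * of_int i, 3 * (2 * \<mu>) / 4 * of_int j)"
    unfolding D_def by auto
  then show ?thesis by (intro that[OF \<open>(i, j) \<noteq> (0, 0)\<close>]) simp_all
qed

theorem lattice_support_le_sqrt_area:
  fixes K :: "pt set"
  assumes K: "convex K" "compact K" and r: "r > 0" "ball 0 r \<subseteq> K"
  shows "\<exists>i j::int. (i, j) \<noteq> (0, 0) \<and>
           (\<forall>x y. (x, y) \<in> K \<longrightarrow> of_int i * x + of_int j * y \<le> sqrt (2/3 * measure lebesgue K))"
proof (rule ccontr)
  define A where "A = measure lebesgue K"
  define \<mu> where "\<mu> = sqrt (2/3 * A)"
  assume "\<not> ?thesis"
  then have wide: "\<exists>x y. (x, y) \<in> K \<and> of_int i * x + of_int j * y > \<mu>"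
    if "(i, j) \<noteq> (0, 0)" for i j :: int
    using that by (auto simp: \<mu>_def A_def not_le)
  have "0 < measure lborel (ball (0::pt) r)" using content_ball_pos[OF r(1)] by blast
  also have "\<dots> = measure lebesgue (ball (0::pt) r)" by (intro measure_completion[symmetric]) auto
  also have "\<dots> \<le> A"
    unfolding A_def using r(2) K(2) by (intro measure_mono_fmeasurable lmeasurable_compact) auto
  finally have \<mu>: "\<mu> > 0" "\<mu> * \<mu> = 2/3 * A" by (auto simp: \<mu>_def)
  obtain i j :: int and p q where "(i, j) \<noteq> (0, 0)"
    and pq: "p \<in> K" "q \<in> K" "p - q = (3 * \<mu> / 2) *\<^sub>R (of_int i, of_int j)"
    using lattice_chord_of_wide_body[OF K r \<mu>(1) wide] by blast
  define f where "f z = det2 (of_int i, of_int j) z" for z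
  have det2_pq: "det2 (p - q) (z - q) = 3 * \<mu> / 2 * (f z - f q)" for z
    unfolding pq(3) f_def det2_scaleR_left det2_diff_right by (simp add: right_diff_distrib)
  have "continuous_on K f" unfolding f_def det2_def by (intro continuous_intros)
  then obtain a b where ab: "a \<in> K" "b \<in> K" "\<And>z. z \<in> K \<Longrightarrow> f b \<le> f z \<and> f z \<le> f a"
    using continuous_attains_sup[OF K(2) _ \<open>continuous_on K f\<close>]
      continuous_attains_inf[OF K(2) _ \<open>continuous_on K f\<close>] pq(1) by (metis empty_iff)
  have "f a > \<mu>"
  proof -
    obtain x y where "(x, y) \<in> K" "of_int (-j) * x + of_int i * y > \<mu>"
      using wide[of "-j" i] \<open>(i, j) \<noteq> (0, 0)\<close> by auto
    then show ?thesis using ab(3)[of "(x, y)"] by (simp add: f_def det2_def)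
  qed
  moreover have "f b < - \<mu>"
  proof -
    obtain x y where "(x, y) \<in> K" "of_int j * x + of_int (-i) * y > \<mu>"
      using wide[of j "-i"] \<open>(i, j) \<noteq> (0, 0)\<close> by auto
    then show ?thesis using ab(3)[of "(x, y)"] by (simp add: f_def det2_def)
  qed
  ultimately have "3 * \<mu> / 4 * (2 * \<mu>) < 3 * \<mu> / 4 * (f a - f b)"
    using \<mu>(1) by (intro mult_strict_left_mono) auto
  also have "\<dots> = (det2 (p - q) (a - q) - det2 (p - q) (b - q)) / 2"
    unfolding det2_pq by (simp add: field_simps)
  also have "\<dots> \<le> A"
    unfolding A_def using ab(3)[OF pq(2)] \<mu>(1)
    by (intro convex_measure_ge_triangles[OF K pq(1,2) ab(1,2)]) (simp_all add: det2_pq mult_nonneg_nonpos)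
  finally show False using \<mu>(2) by simp
qed

lemma tangent_vectors_bdry_lift_orthogonal:
  fixes U :: "pt set"
  assumes "closed U" and p_max: "\<And>z. z \<in> U \<Longrightarrow> k \<bullet> z \<le> k \<bullet> p"
    and "snd x = p" and w: "w \<in> tangent_vectors (bdry_lift U) x"
  shows "k \<bullet> snd w = 0"
proof -
  obtain \<gamma> e where "e > 0" and \<gamma>_in: "\<forall>t\<in>{-e<..<e}. \<gamma> t \<in> bdry_lift U" and "\<gamma> 0 = x"
    and \<gamma>_deriv: "(\<gamma> has_vector_derivative w) (at 0)"
    using w unfolding tangent_vectors_def by blast
  define g where "g = (\<lambda>t. k \<bullet> snd (\<gamma> t))"
  have "(g has_real_derivative k \<bullet> snd w) (at 0)"
    using bounded_linear.has_derivative[OF bounded_linear_inner_right_comp[OF bounded_linear_snd]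
        \<gamma>_deriv[unfolded has_vector_derivative_def]]
    by (simp add: g_def has_field_derivative_def mult_commute_abs)
  moreover have "g t \<le> g 0" if "\<bar>0 - t\<bar> < e" for t
  proof -
    have "\<gamma> t \<in> bdry_lift U" using \<gamma>_in that by (simp add: abs_less_iff)
    then have "snd (\<gamma> t) \<in> U"
      using frontier_subset_closed[OF \<open>closed U\<close>] by (auto simp: bdry_lift_def)
    then show ?thesis using p_max \<open>\<gamma> 0 = x\<close> \<open>snd x = p\<close> by (simp add: g_def)
  qed
  ultimately show ?thesis using DERIV_local_max \<open>e > 0\<close> by blast
qed

lemma action_closed_reeb_orbit:
  assumes "closed_reeb_orbit \<Sigma> \<gamma> T"
  shows "action \<gamma> T = T"
proof -
  have "lam_can (\<gamma> t) (vector_derivative \<gamma> (at t)) = 1" for t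
  proof -
    obtain v where "(\<gamma> has_vector_derivative v) (at t)" "is_reeb_vector \<Sigma> (\<gamma> t) v"
      using assms unfolding closed_reeb_orbit_def by blast
    then show ?thesis by (simp add: vector_derivative_at is_reeb_vector_def)
  qed
  then show ?thesis using assms by (simp add: action_def closed_reeb_orbit_def)
qed

lemma sys_bd_le_period:
  assumes "closed_reeb_orbit (bdry_lift A) \<gamma> T"
  shows "0 \<le> sys_bd A" "sys_bd A \<le> T"
proof -
  define S where "S = {action \<gamma> T | \<gamma> T. closed_reeb_orbit (bdry_lift A) \<gamma> T}"
  have S_pos: "0 \<le> s" if "s \<in> S" for s
    using that action_closed_reeb_orbit by (auto simp: S_def closed_reeb_orbit_def)
  have "T \<in> S" using assms action_closed_reeb_orbit[OF assms] unfolding S_def by force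
  then have "Inf S \<le> T" "0 \<le> Inf S"
    using S_pos by (auto intro!: cInf_lower bdd_belowI cInf_greatest)
  then show "0 \<le> sys_bd A" "sys_bd A \<le> T" by (simp_all add: sys_bd_def S_def)
qed

lemma support_point_in_frontier:
  fixes U :: "'a::real_inner set"
  assumes "closed U" "k \<noteq> 0" "p \<in> U" and p_max: "\<And>z. z \<in> U \<Longrightarrow> k \<bullet> z \<le> k \<bullet> p"
  shows "p \<in> frontier U"
proof -
  have "p \<notin> interior U"
  proof
    assume "p \<in> interior U"
    then obtain e where "e > 0" "ball p e \<subseteq> U" by (meson mem_interior)
    define z where "z = p + (e / (2 * norm k)) *\<^sub>R k"
    have "z \<in> U" using \<open>e > 0\<close> \<open>k \<noteq> 0\<close> \<open>ball p e \<subseteq> U\<close> by (auto simp: z_def dist_norm)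
    moreover have "k \<bullet> z = k \<bullet> p + e / (2 * norm k) * (k \<bullet> k)" by (simp add: z_def inner_add_right)
    moreover have "e / (2 * norm k) * (k \<bullet> k) > 0" using \<open>e > 0\<close> \<open>k \<noteq> 0\<close> by simp
    ultimately show False using p_max[of z] by simp
  qed
  then show ?thesis using assms(1,3) by (simp add: frontier_def)
qed

lemma closed_reeb_orbit_at_support_point:
  fixes U :: "pt set"
  assumes "closed U" and "k \<noteq> 0" and "in_lattice k" and "p \<in> U"
    and p_max: "\<And>z. z \<in> U \<Longrightarrow> k \<bullet> z \<le> k \<bullet> p" and "k \<bullet> p > 0"
  shows "closed_reeb_orbit (bdry_lift U) (\<lambda>t. (t *\<^sub>R (1 / (k \<bullet> p)) *\<^sub>R k, p)) (k \<bullet> p)"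
proof -
  define a where "a = (1 / (k \<bullet> p)) *\<^sub>R k"
  define \<gamma> where "\<gamma> = (\<lambda>t. (t *\<^sub>R a, p))"
  have "p \<in> frontier U" by (rule support_point_in_frontier) fact+
  have \<gamma>_deriv: "((\<lambda>s. ((c + s) *\<^sub>R a, p)) has_vector_derivative (a, 0)) (at t)" for c t
    by (auto intro!: derivative_eq_intros)
  have reeb: "is_reeb_vector (bdry_lift U) (\<gamma> t) (a, 0)" for t
    unfolding is_reeb_vector_def
  proof (intro conjI ballI)
    show "(a, 0) \<in> tangent_vectors (bdry_lift U) (\<gamma> t)"
      unfolding tangent_vectors_def using \<gamma>_deriv[of t 0] \<open>p \<in> frontier U\<close>
      by (intro CollectI exI[of _ "\<lambda>s. ((t + s) *\<^sub>R a, p)"] exI[of _ 1])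
         (auto simp: bdry_lift_def \<gamma>_def)
    show "lam_can (\<gamma> t) (a, 0) = 1"
      using \<open>k \<bullet> p > 0\<close> by (simp add: lam_can_def \<gamma>_def a_def inner_commute)
    fix w assume "w \<in> tangent_vectors (bdry_lift U) (\<gamma> t)"
    then have "k \<bullet> snd w = 0"
      using tangent_vectors_bdry_lift_orthogonal[OF \<open>closed U\<close> p_max, of "\<gamma> t" w]
      by (simp add: \<gamma>_def)
    then show "dlam_can (a, 0) w = 0" by (simp add: dlam_can_def a_def inner_commute)
  qed
  have "closed_reeb_orbit (bdry_lift U) \<gamma> (k \<bullet> p)"
    unfolding closed_reeb_orbit_def
  proof (intro conjI allI)
    show "\<gamma> t \<in> bdry_lift U" for t
      using \<open>p \<in> frontier U\<close> by (simp add: \<gamma>_def bdry_lift_def)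
    show "\<exists>v. (\<gamma> has_vector_derivative v) (at t) \<and> is_reeb_vector (bdry_lift U) (\<gamma> t) v" for t
      using \<gamma>_deriv[of 0 t] reeb[of t] by (intro exI[of _ "(a, 0)"]) (simp add: \<gamma>_def)
    show "in_lattice (fst (\<gamma> (k \<bullet> p)) - fst (\<gamma> 0))"
      using \<open>k \<bullet> p > 0\<close> \<open>in_lattice k\<close> by (simp add: \<gamma>_def a_def)
  qed (use \<open>k \<bullet> p > 0\<close> in \<open>simp_all add: \<gamma>_def\<close>)
  then show ?thesis by (simp add: \<gamma>_def a_def)
qed

lemma sys_bd_le_lattice_support:
  fixes U :: "pt set" and i j :: int
  assumes U: "compact U" "r > 0" "ball 0 r \<subseteq> U" and "(i, j) \<noteq> (0, 0)"
    and bound: "\<And>x y. (x, y) \<in> U \<Longrightarrow> of_int i * x + of_int j * y \<le> c"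
  shows "0 \<le> sys_bd U" "sys_bd U \<le> c"
proof -
  define k where "k = (real_of_int i, real_of_int j)"
  have "k \<noteq> 0" "in_lattice k"
    using \<open>(i, j) \<noteq> (0, 0)\<close> by (auto simp: k_def zero_prod_def in_lattice_def)
  have "U \<noteq> {}" using U(2,3) by auto
  moreover have "continuous_on U (\<lambda>z. k \<bullet> z)" by (intro continuous_intros)
  ultimately obtain p where "p \<in> U" and p_max: "\<And>z. z \<in> U \<Longrightarrow> k \<bullet> z \<le> k \<bullet> p"
    using continuous_attains_sup[OF U(1)] by blast
  have "k \<bullet> p > 0"
  proof -
    define z where "z = (r / (2 * norm k)) *\<^sub>R k"
    have "z \<in> U" using U(2,3) \<open>k \<noteq> 0\<close> by (auto simp: z_def)
    moreover have "k \<bullet> z > 0" using U(2) \<open>k \<noteq> 0\<close> by (simp add: z_def)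
    ultimately show ?thesis using p_max by (meson less_le_trans)
  qed
  have "k \<bullet> p \<le> c" using bound[of "fst p" "snd p"] \<open>p \<in> U\<close> by (simp add: k_def inner_prod_def)
  with sys_bd_le_period[OF closed_reeb_orbit_at_support_point[OF compact_imp_closed[OF U(1)]
      \<open>k \<noteq> 0\<close> \<open>in_lattice k\<close> \<open>p \<in> U\<close> p_max \<open>k \<bullet> p > 0\<close>]]
  show "0 \<le> sys_bd U" "sys_bd U \<le> c" by simp_all
qed

lemma smooth_fun_continuous_on: "smooth_fun f \<Longrightarrow> continuous_on S f"
  unfolding smooth_fun_def
  by (metis continuous_at_imp_continuous_on differentiable_imp_continuous_within funpow_0)

lemma radial_domain_eq_polar_image:
  assumes periodic: "\<And>t. f (t + 2 * pi) = f t"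
  shows "radial_domain f = (\<lambda>z. (fst z * cos (snd z), fst z * sin (snd z))) `
    {z. 0 \<le> snd z \<and> snd z \<le> 2 * pi \<and> 0 \<le> fst z \<and> fst z \<le> f (snd z)}"
    (is "_ = ?g ` ?C")
proof
  interpret periodic_fun_simple f "2 * pi" by standard (rule periodic)
  show "radial_domain f \<subseteq> ?g ` ?C"
  proof
    fix z assume "z \<in> radial_domain f"
    then obtain \<rho> t where z: "z = (\<rho> * cos t, \<rho> * sin t)" "0 \<le> \<rho>" "\<rho> \<le> f t"
      unfolding radial_domain_def by blast
    define t' where "t' = t + of_int (- \<lfloor>t / (2 * pi)\<rfloor>) * (2 * pi)"
    have "0 \<le> t' \<and> t' < 2 * pi"
      using floor_divide_lower[of "2 * pi" t] floor_divide_upper[of "2 * pi" t]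
      by (simp add: t'_def algebra_simps)
    moreover have "f t' = f t" "cos t' = cos t" "sin t' = sin t"
      unfolding t'_def using cos.plus_of_int[of t "- \<lfloor>t / (2 * pi)\<rfloor>"]
        sin.plus_of_int[of t "- \<lfloor>t / (2 * pi)\<rfloor>"] by (simp_all only: plus_of_int) simp_all
    ultimately have "(\<rho>, t') \<in> ?C" "z = ?g (\<rho>, t')" using z by simp_all
    then show "z \<in> ?g ` ?C" by blast
  qed
  show "?g ` ?C \<subseteq> radial_domain f" by (auto simp: radial_domain_def)
qed

lemma compact_subgraph_on_interval:
  fixes f :: "real \<Rightarrow> real"
  assumes f: "continuous_on UNIV f"
  shows "compact {z. a \<le> snd z \<and> snd z \<le> b \<and> 0 \<le> fst z \<and> fst z \<le> f (snd z)}"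
    (is "compact ?C")
proof -
  have "continuous_on {a..b} f" using f by (rule continuous_on_subset) simp
  then obtain tM where tM: "\<And>t. t \<in> {a..b} \<Longrightarrow> f t \<le> f tM"
    using continuous_attains_sup[OF compact_Icc] by (metis atLeastatMost_empty_iff2 empty_iff)
  have "?C \<subseteq> cbox (0, a) (f tM, b)"
  proof
    fix z assume "z \<in> ?C"
    then show "z \<in> cbox (0, a) (f tM, b)" using tM[of "snd z"] by (cases z) auto
  qed
  then have "bounded ?C" by (rule bounded_subset[OF bounded_cbox])
  moreover have "continuous_on UNIV (\<lambda>z::pt. f (snd z))"
    by (rule continuous_on_compose2[OF f]) (auto intro: continuous_intros)
  then have "closed ?C" by (intro closed_Collect_conj closed_Collect_le continuous_intros) auto
  ultimately show ?thesis by (simp add: compact_eq_bounded_closed)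
qed

lemma radial_domain_compact:
  assumes "continuous_on UNIV f" and "\<And>t. f (t + 2 * pi) = f t"
  shows "compact (radial_domain f)"
  unfolding radial_domain_eq_polar_image[of f, OF assms(2)]
  by (intro compact_continuous_image compact_subgraph_on_interval assms(1) continuous_intros)

lemma radial_domain_contains_ball:
  assumes f: "continuous_on UNIV f" and pos: "\<And>t. f t > 0"
  obtains r where "r > 0" "ball 0 r \<subseteq> radial_domain f"
proof -
  have "continuous_on {0..2 * pi} f" using f by (rule continuous_on_subset) simp
  moreover have "{0..2 * pi} \<noteq> {}" by simp
  ultimately obtain tm where tm: "\<And>t. t \<in> {0..2 * pi} \<Longrightarrow> f tm \<le> f t"
    using continuous_attains_inf[OF compact_Icc] by blast
  have "ball 0 (f tm) \<subseteq> radial_domain f"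
  proof
    fix z :: pt assume "z \<in> ball 0 (f tm)"
    obtain x y where z: "z = (x, y)" by fastforce
    define \<rho> where "\<rho> = norm z"
    have "\<rho> < f tm" using \<open>z \<in> ball 0 (f tm)\<close> by (simp add: \<rho>_def)
    show "z \<in> radial_domain f"
    proof (cases "\<rho> = 0")
      case True
      then have "z = (0 * cos 0, 0 * sin 0)" by (simp add: \<rho>_def zero_prod_def)
      then show ?thesis using less_imp_le[OF pos[of 0]] unfolding radial_domain_def by blast
    next
      case False
      then have "\<rho> > 0" by (simp add: \<rho>_def)
      have "\<rho>\<^sup>2 = x\<^sup>2 + y\<^sup>2" by (simp add: \<rho>_def z norm_Pair)
      have "(x / \<rho>)\<^sup>2 + (y / \<rho>)\<^sup>2 = (x\<^sup>2 + y\<^sup>2) / \<rho>\<^sup>2"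
        by (simp add: power_divide add_divide_distrib)
      also have "\<dots> = 1" unfolding \<open>\<rho>\<^sup>2 = x\<^sup>2 + y\<^sup>2\<close>[symmetric] using \<open>\<rho> > 0\<close> by simp
      finally obtain \<theta> where \<theta>: "0 \<le> \<theta>" "\<theta> < 2 * pi" "x / \<rho> = cos \<theta>" "y / \<rho> = sin \<theta>"
        by (rule sincos_total_2pi)
      then have "z = (\<rho> * cos \<theta>, \<rho> * sin \<theta>)" using \<open>\<rho> > 0\<close> by (simp add: z field_simps)
      moreover have "\<rho> \<le> f \<theta>" using tm[of \<theta>] \<theta> \<open>\<rho> < f tm\<close> by simp
      ultimately show ?thesis using \<open>\<rho> > 0\<close> unfolding radial_domain_def by force
    qed
  qed
  then show ?thesis using pos[of tm] that by blast
qed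

lemma smooth_star_shaped_domain_compact_ball:
  assumes "smooth_star_shaped_domain U"
  obtains r where "compact U" "r > 0" "ball 0 r \<subseteq> U"
proof -
  obtain f where f: "smooth_fun f" "\<And>t. f t > 0" "\<And>t. f (t + 2 * pi) = f t"
    and U: "U = radial_domain f"
    using assms unfolding smooth_star_shaped_domain_def by blast
  have "compact U"
    unfolding U using radial_domain_compact smooth_fun_continuous_on f by blast
  moreover obtain r where "r > 0" "ball 0 r \<subseteq> U"
    unfolding U using radial_domain_contains_ball smooth_fun_continuous_on f by metis
  ultimately show ?thesis using that by blast
qed

theorem corollaryA2:
  fixes U :: "(real \<times> real) set"
  assumes "smooth_star_shaped_domain U"
  shows "rho_sys U \<le> measure lebesgue (convex hull U) / (3 * measure lebesgue U)"
proof -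
  obtain r where "compact U" and r: "r > 0" "ball 0 r \<subseteq> U"
    using smooth_star_shaped_domain_compact_ball[OF assms] .
  define K where "K = convex hull U"
  have K: "U \<subseteq> K" "convex K" "compact K"
    using \<open>compact U\<close> by (simp_all add: K_def hull_subset compact_convex_hull)
  then have "ball 0 r \<subseteq> K" using r(2) by blast
  then obtain i j :: int where "(i, j) \<noteq> (0, 0)"
    and "\<forall>x y. (x, y) \<in> K \<longrightarrow> of_int i * x + of_int j * y \<le> sqrt (2/3 * measure lebesgue K)"
    using lattice_support_le_sqrt_area[OF K(2,3) r(1)] by blast
  then have sys: "0 \<le> sys_bd U" "sys_bd U \<le> sqrt (2/3 * measure lebesgue K)"
    using sys_bd_le_lattice_support[OF \<open>compact U\<close> r] K(1) by (meson subsetD)+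
  have "(sys_bd U)\<^sup>2 \<le> 2/3 * measure lebesgue K"
    using power_mono[OF sys(2,1), of 2] by simp
  then have "(sys_bd U)\<^sup>2 / (2 * measure lebesgue U) \<le> (2/3 * measure lebesgue K) / (2 * measure lebesgue U)"
    by (rule divide_right_mono) simp
  then show ?thesis
    by (cases "measure lebesgue U = 0") (simp_all add: rho_sys_def vol_bd_def K_def field_simps)
qed

end
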